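(* Let $(V,P)$ be a finite, connected, lazy, reversible Markov chain equipped with the combinatorial distance, and assume every edge has non-negative Ollivier sectional curvature. Then \[ \alpha_{\operatorname{mod}}\ge\inf_{x\sim y}\kappa(x,y). \]
   Context: Lazy means $\sum_yP(x,y)=1$ and $P(x,x)\ge\frac12$; $P$ has symmetric support; $m$ is the probability measure with $m(x)P(x,y)=m(y)P(y,x)$. $x\sim y$ means $x\neq y$ and $P(x,y)>0$; $d$ is the combinatorial (edge-count) distance. $\Delta f(x)=\sum_zP(x,z)(f(z)-f(x))$, $\langle f,g\rangle=\sum f g\, m$, $\mathcal E(f,g)=-\langle\Delta f,g\rangle$. For positive $f$ with $\langle f,1\rangle=1$, $\operatorname{Ent}(f)=\langle f,\log f\rangle$; the modified log-Sobolev constant is $\alpha_{\operatorname{mod}}=\inf\{\mathcal E(f,\log f)/\operatorname{Ent}(f)\}$ over non-constant positive $f$ with $\langle f,1\rangle=1$. Ollivier curvature: $\kappa(x,y)=\inf\{(\Delta f(x)-\Delta f(y))/d(x,y): f\text{ 1-Lipschitz w.r.t. }d,\ f(y)-f(x)=d(x,y)\}$. An edge $x\sim y$ has non-negative Ollivier sectional curvature if there is a coupling $\pi$ of $P(x,\cdot)$ and $P(y,\cdot)$ with $d(x',y')\le1$ whenever $\pi(x',y')>0$. *)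

theory Defs
  imports Main "HOL-Library.Transitive_Closure_Table" Complex_Main
begin

definition adj :: "('a \<Rightarrow> 'a \<Rightarrow> real) \<Rightarrow> 'a \<Rightarrow> 'a \<Rightarrow> bool" where
  "adj P x y \<longleftrightarrow> x \<noteq> y \<and> P x y > 0"

definition markov_kernel :: "('a::finite \<Rightarrow> 'a \<Rightarrow> real) \<Rightarrow> bool" where
  "markov_kernel P \<longleftrightarrow> (\<forall>x y. P x y \<ge> 0) \<and> (\<forall>x. (\<Sum>y\<in>UNIV. P x y) = 1)"

definition lazy :: "('a::finite \<Rightarrow> 'a \<Rightarrow> real) \<Rightarrow> bool" where
  "lazy P \<longleftrightarrow> markov_kernel P \<and> (\<forall>x. P x x \<ge> 1/2)"

definition symmetric_support :: "('a \<Rightarrow> 'a \<Rightarrow> real) \<Rightarrow> bool" where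
  "symmetric_support P \<longleftrightarrow> (\<forall>x y. P x y > 0 \<longleftrightarrow> P y x > 0)"

definition reversible_prob :: "('a::finite \<Rightarrow> 'a \<Rightarrow> real) \<Rightarrow> ('a \<Rightarrow> real) \<Rightarrow> bool" where
  "reversible_prob P m \<longleftrightarrow> (\<forall>x. m x \<ge> 0) \<and> (\<Sum>x\<in>UNIV. m x) = 1 \<and>
     (\<forall>x y. m x * P x y = m y * P y x)"

definition connected_chain :: "('a \<Rightarrow> 'a \<Rightarrow> real) \<Rightarrow> bool" where
  "connected_chain P \<longleftrightarrow> (\<forall>x y. (adj P)\<^sup>*\<^sup>* x y)"

definition dist_comb :: "('a \<Rightarrow> 'a \<Rightarrow> real) \<Rightarrow> 'a \<Rightarrow> 'a \<Rightarrow> nat" where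
  "dist_comb P x y = (LEAST n. (adj P ^^ n) x y)"

definition laplacian :: "('a::finite \<Rightarrow> 'a \<Rightarrow> real) \<Rightarrow> ('a \<Rightarrow> real) \<Rightarrow> 'a \<Rightarrow> real" where
  "laplacian P f x = (\<Sum>z\<in>UNIV. P x z * (f z - f x))"

definition inner_m :: "('a::finite \<Rightarrow> real) \<Rightarrow> ('a \<Rightarrow> real) \<Rightarrow> ('a \<Rightarrow> real) \<Rightarrow> real" where
  "inner_m m f g = (\<Sum>x\<in>UNIV. f x * g x * m x)"

definition dirichlet :: "('a::finite \<Rightarrow> 'a \<Rightarrow> real) \<Rightarrow> ('a \<Rightarrow> real) \<Rightarrow> ('a \<Rightarrow> real) \<Rightarrow> ('a \<Rightarrow> real) \<Rightarrow> real" where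
  "dirichlet P m f g = - inner_m m (laplacian P f) g"

definition Ent :: "('a::finite \<Rightarrow> real) \<Rightarrow> ('a \<Rightarrow> real) \<Rightarrow> real" where
  "Ent m f = inner_m m f (\<lambda>x. ln (f x))"

definition alpha_mod :: "('a::finite \<Rightarrow> 'a \<Rightarrow> real) \<Rightarrow> ('a \<Rightarrow> real) \<Rightarrow> real" where
  "alpha_mod P m = Inf {dirichlet P m f (\<lambda>x. ln (f x)) / Ent m f | f.
      (\<forall>x. f x > 0) \<and> inner_m m f (\<lambda>_. 1) = 1 \<and> (\<exists>x y. f x \<noteq> f y)}"

definition lipschitz1 :: "('a \<Rightarrow> 'a \<Rightarrow> real) \<Rightarrow> ('a \<Rightarrow> real) \<Rightarrow> bool" where
  "lipschitz1 P f \<longleftrightarrow> (\<forall>x y. \<bar>f x - f y\<bar> \<le> real (dist_comb P x y))"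

definition ollivier :: "('a::finite \<Rightarrow> 'a \<Rightarrow> real) \<Rightarrow> 'a \<Rightarrow> 'a \<Rightarrow> real" where
  "ollivier P x y = Inf {(laplacian P f x - laplacian P f y) / real (dist_comb P x y) | f.
      lipschitz1 P f \<and> f y - f x = real (dist_comb P x y)}"

definition nonneg_sectional :: "('a::finite \<Rightarrow> 'a \<Rightarrow> real) \<Rightarrow> 'a \<Rightarrow> 'a \<Rightarrow> bool" where
  "nonneg_sectional P x y \<longleftrightarrow> (\<exists>\<pi> :: 'a \<Rightarrow> 'a \<Rightarrow> real.
      (\<forall>x' y'. \<pi> x' y' \<ge> 0) \<and>
      (\<forall>x'. (\<Sum>y'\<in>UNIV. \<pi> x' y') = P x x') \<and>
      (\<forall>y'. (\<Sum>x'\<in>UNIV. \<pi> x' y') = P y y') \<and>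
      (\<forall>x' y'. \<pi> x' y' > 0 \<longrightarrow> dist_comb P x' y' \<le> 1))"

end

theory Submission
  imports Defs "HOL-Analysis.Analysis"
begin

(* Write K for the minimal Ollivier curvature over edges and fix \<alpha> < K. It suffices that
   F(f) = E(f, log f) - \<alpha> Ent(f) is non-negative for every positive density f. Minimise F over
   the compact set of densities bounded below by \<delta> = min f. If a minimiser f were non-constant,
   take an edge x ~ y on which log f increases most, by L > 0. Moving mass from y to x does not
   decrease F, which bounds \<alpha> L from below by
   (\<Delta> log f (x) - \<Delta> log f (y)) + (\<Delta>f(x)/f(x) - \<Delta>f(y)/f(y)).
   Curvature, applied to the 1-Lipschitz function (log f)/L, makes the first bracket at least K L.
   The second bracket is non-negative: the sectional coupling pairs points at distance at most 1,
   along which log f grows by at most L. Hence \<alpha> \<ge> K, a contradiction. So the minimiser is the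
   constant density 1, where F vanishes. *)

lemma dist_comb_adj: "adj P x y \<Longrightarrow> dist_comb P x y = 1"
  unfolding dist_comb_def
proof (rule Least_equality)
  show "adj P x y \<Longrightarrow> (adj P ^^ 1) x y" by (simp only: relpowp_1)
  show "1 \<le> n" if "adj P x y" "(adj P ^^ n) x y" for n
    using that by (cases n) (auto simp: adj_def)
qed

lemma relpowp_abs_diff_le:
  assumes "\<And>u v. R u v \<Longrightarrow> \<bar>g u - g v\<bar> \<le> L"
  shows "(R ^^ n) x y \<Longrightarrow> \<bar>g x - g y\<bar> \<le> real n * L"
proof (induction n arbitrary: y)
  case 0
  then show ?case by simp
next
  case (Suc n)
  then obtain z where "(R ^^ n) x z" "R z y" by (auto elim: relpowp_Suc_E)
  with Suc.IH assms have "\<bar>g x - g z\<bar> \<le> real n * L" "\<bar>g z - g y\<bar> \<le> L" by blast+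
  then show ?case by (simp add: algebra_simps)
qed

lemma laplacian_add_scaled:
  "laplacian P (\<lambda>z. f z + t * h z) x = laplacian P f x + t * laplacian P h x"
  unfolding laplacian_def sum_distrib_left sum.distrib[symmetric]
  by (rule sum.cong) (auto simp: algebra_simps)

lemma laplacian_divide: "laplacian P (\<lambda>z. g z / c) x = laplacian P g x / c"
  unfolding laplacian_def sum_divide_distrib
  by (rule sum.cong) (auto simp: diff_divide_distrib[symmetric])

abbreviation min_ollivier :: "('a::finite \<Rightarrow> 'a \<Rightarrow> real) \<Rightarrow> real" where
  "min_ollivier P \<equiv> Inf {ollivier P x y | x y. adj P x y}"

lemma min_ollivier_le:
  "adj P x y \<Longrightarrow> min_ollivier P \<le> ollivier P x y"
proof (rule cInf_lower)
  have "{ollivier P x y | x y. adj P x y} \<subseteq> range (case_prod (ollivier P))" by auto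
  then have "finite {ollivier P x y | x y. adj P x y}" by (rule finite_subset) simp
  then show "bdd_below {ollivier P x y | x y. adj P x y}" by (rule bdd_below_finite)
qed auto

lemma x_ln_x_ge: "0 < x \<Longrightarrow> x - 1 \<le> x * ln (x::real)"
  using ln_diff_le[of 1 x] by (simp add: field_simps)

lemma x_ln_x_gt: "0 < x \<Longrightarrow> x \<noteq> 1 \<Longrightarrow> x - 1 < x * ln (x::real)"
  using ln_diff_less[of 1 x] by (simp add: field_simps)

locale reversible_chain =
  fixes P :: "'a::finite \<Rightarrow> 'a \<Rightarrow> real" and m :: "'a \<Rightarrow> real"
  assumes markov: "markov_kernel P"
    and reversible: "reversible_prob P m"
    and connected: "connected_chain P"
begin

lemma P_nonneg: "0 \<le> P x y"
  using markov by (simp add: markov_kernel_def)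

lemma P_row_sum: "(\<Sum>y\<in>UNIV. P x y) = 1"
  using markov by (simp add: markov_kernel_def)

lemma m_nonneg: "0 \<le> m x"
  using reversible by (simp add: reversible_prob_def)

lemma m_sum: "(\<Sum>x\<in>UNIV. m x) = 1"
  using reversible by (simp add: reversible_prob_def)

lemma detailed_balance: "m x * P x y = m y * P y x"
  using reversible by (simp add: reversible_prob_def)

lemma adj_rtranclp: "(adj P)\<^sup>*\<^sup>* x y"
  using connected by (simp add: connected_chain_def)

lemma m_pos: "0 < m x"
proof (rule ccontr)
  assume "\<not> 0 < m x"
  then have "m x = 0" using m_nonneg[of x] by simp
  have "m y = 0" for y
    using adj_rtranclp[of y x]
  proof (induction rule: converse_rtranclp_induct)
    case (step y z)
    have "m y * P y z = m z * P z y" by (rule detailed_balance)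
    with step.IH have "m y * P y z = 0" by simp
    moreover have "0 < P y z" using step.hyps(1) by (simp add: adj_def)
    ultimately show ?case by simp
  qed fact
  then show False using m_sum by simp
qed

lemma adj_sym: "adj P x y \<Longrightarrow> adj P y x"
  using detailed_balance[of x y] m_pos[of x] m_pos[of y]
  by (auto simp: adj_def) (metis mult_pos_pos zero_less_mult_pos)

lemma edgewise_constant:
  assumes "\<And>p q. adj P p q \<Longrightarrow> f p = f q"
  shows "f x = f y"
  using adj_rtranclp[of x y] by induction (auto dest: assms)

lemma dist_comb_path: "(adj P ^^ dist_comb P x y) x y"
proof -
  have "\<exists>n. (adj P ^^ n) x y" using adj_rtranclp by (simp add: rtranclp_power)
  then show ?thesis unfolding dist_comb_def by (rule LeastI_ex)
qed

lemma dist_comb_le_1D: "dist_comb P x y \<le> 1 \<Longrightarrow> x = y \<or> adj P x y"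
  using dist_comb_path[of x y] by (auto simp: le_Suc_eq)

lemma lipschitz1I_edges:
  assumes "\<And>u v. adj P u v \<Longrightarrow> \<bar>g u - g v\<bar> \<le> 1"
  shows "lipschitz1 P g"
  unfolding lipschitz1_def
proof (intro allI)
  fix x y
  show "\<bar>g x - g y\<bar> \<le> real (dist_comb P x y)"
    using relpowp_abs_diff_le[OF assms dist_comb_path] by simp
qed

lemma laplacian_eq: "laplacian P f x = (\<Sum>z\<in>UNIV. P x z * f z) - f x"
  unfolding laplacian_def
  by (simp add: right_diff_distrib sum_subtractf flip: sum_distrib_right) (simp add: P_row_sum)

lemma laplacian_self_adjoint: "inner_m m (laplacian P h) g = inner_m m h (laplacian P g)"
proof -
  have "(\<Sum>x\<in>UNIV. \<Sum>z\<in>UNIV. m x * P x z * h z * g x) = (\<Sum>z\<in>UNIV. \<Sum>x\<in>UNIV. m z * P z x * h z * g x)"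
    by (subst sum.swap) (simp add: detailed_balance)
  then show ?thesis
    by (simp add: inner_m_def laplacian_eq algebra_simps sum_subtractf sum_distrib_left sum_distrib_right)
qed

lemma abs_laplacian_le:
  assumes "lipschitz1 P f"
  shows "\<bar>laplacian P f x\<bar> \<le> (\<Sum>z\<in>UNIV. P x z * real (dist_comb P z x))"
proof -
  have "\<bar>laplacian P f x\<bar> \<le> (\<Sum>z\<in>UNIV. \<bar>P x z * (f z - f x)\<bar>)"
    unfolding laplacian_def by (rule sum_abs)
  also have "\<dots> \<le> (\<Sum>z\<in>UNIV. P x z * real (dist_comb P z x))"
    using assms P_nonneg by (intro sum_mono) (simp add: abs_mult lipschitz1_def mult_left_mono)
  finally show ?thesis .
qed

lemma ollivier_le_laplacian_diff:
  assumes "adj P x y" "lipschitz1 P f" "f y - f x = 1"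
  shows "ollivier P x y \<le> laplacian P f x - laplacian P f y"
  unfolding ollivier_def
proof (rule cInf_lower)
  show "laplacian P f x - laplacian P f y \<in> {(laplacian P f x - laplacian P f y) / real (dist_comb P x y) |f.
      lipschitz1 P f \<and> f y - f x = real (dist_comb P x y)}"
    using assms by (auto simp: dist_comb_adj)
  let ?B = "\<lambda>x. \<Sum>z\<in>UNIV. P x z * real (dist_comb P z x)"
  show "bdd_below {(laplacian P f x - laplacian P f y) / real (dist_comb P x y) |f.
      lipschitz1 P f \<and> f y - f x = real (dist_comb P x y)}"
  proof (rule bdd_belowI[of _ "- ?B x - ?B y"], clarify)
    fix h assume "lipschitz1 P h"
    then have "\<bar>laplacian P h x\<bar> \<le> ?B x" "\<bar>laplacian P h y\<bar> \<le> ?B y"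
      by (rule abs_laplacian_le)+
    then show "- ?B x - ?B y \<le> (laplacian P h x - laplacian P h y) / real (dist_comb P x y)"
      using dist_comb_adj[OF assms(1)] by simp
  qed
qed

definition mlsi_gap :: "real \<Rightarrow> ('a \<Rightarrow> real) \<Rightarrow> real" where
  "mlsi_gap \<alpha> f = dirichlet P m f (\<lambda>x. ln (f x)) - \<alpha> * Ent m f"

definition mlsi_gradient :: "real \<Rightarrow> ('a \<Rightarrow> real) \<Rightarrow> 'a \<Rightarrow> real" where
  "mlsi_gradient \<alpha> f z =
     - laplacian P (\<lambda>x. ln (f x)) z - laplacian P f z / f z - \<alpha> * (ln (f z) + 1)"

lemma mlsi_gap_has_directional_derivative:
  assumes "\<And>x. 0 < f x"
  shows "((\<lambda>t. mlsi_gap \<alpha> (\<lambda>x. f x + t * h x)) has_real_derivative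
           inner_m m h (mlsi_gradient \<alpha> f)) (at 0)"
proof -
  have nonzero: "f x \<noteq> 0" for x using assms[of x] by simp
  let ?D = "- inner_m m (laplacian P h) (\<lambda>x. ln (f x)) - inner_m m (laplacian P f) (\<lambda>x. h x / f x)
      - \<alpha> * inner_m m h (\<lambda>x. ln (f x) + 1)"
  have derivative: "((\<lambda>t. mlsi_gap \<alpha> (\<lambda>x. f x + t * h x)) has_real_derivative ?D) (at 0)"
    unfolding mlsi_gap_def dirichlet_def Ent_def inner_m_def laplacian_add_scaled
    using assms
    by (auto intro!: derivative_eq_intros
        simp: nonzero sum_subtractf sum_negf sum_distrib_left sum.distrib[symmetric] algebra_simps)
  moreover have "?D = inner_m m h (mlsi_gradient \<alpha> f)"
    unfolding laplacian_self_adjoint[of h]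
    by (simp add: nonzero inner_m_def mlsi_gradient_def sum_subtractf sum_negf sum_distrib_left
        sum.distrib[symmetric] algebra_simps)
  ultimately show ?thesis by simp
qed

definition densities_above :: "real \<Rightarrow> ('a \<Rightarrow> real) set" where
  "densities_above \<delta> = {f. (\<forall>x. \<delta> \<le> f x) \<and> inner_m m f (\<lambda>_. 1) = 1}"

lemma minimizer_gradient_le:
  assumes "0 < \<delta>" and f: "f \<in> densities_above \<delta>"
    and minimal: "\<And>g. g \<in> densities_above \<delta> \<Longrightarrow> mlsi_gap \<alpha> f \<le> mlsi_gap \<alpha> g"
    and "\<delta> < f b"
  shows "mlsi_gradient \<alpha> f b \<le> mlsi_gradient \<alpha> f a"
proof (rule ccontr)
  assume less: "\<not> ?thesis"
  then have "a \<noteq> b" by auto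
  have f_ge: "\<delta> \<le> f x" for x using f by (simp add: densities_above_def)
  have m_nonzero: "m x \<noteq> 0" for x using m_pos[of x] by simp
  \<comment> \<open>moving mass from \<open>b\<close> to \<open>a\<close> is admissible for small \<open>t > 0\<close> because \<open>f b > \<delta>\<close>\<close>
  define h where "h z = (if z = a then 1 / m a else 0) - (if z = b then 1 / m b else 0)" for z
  have pairing: "inner_m m h g = g a - g b" for g
    by (simp add: inner_m_def h_def left_diff_distrib sum_subtractf m_nonzero
        if_distrib[where f = "\<lambda>u. u * _"] cong: if_cong)
  have f_pos: "0 < f x" for x using f_ge[of x] \<open>0 < \<delta>\<close> by simp
  have derivative: "((\<lambda>t. mlsi_gap \<alpha> (\<lambda>x. f x + t * h x)) has_real_derivative
      mlsi_gradient \<alpha> f a - mlsi_gradient \<alpha> f b) (at 0)"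
    using mlsi_gap_has_directional_derivative[of f \<alpha> h, OF f_pos] unfolding pairing .
  have "mlsi_gradient \<alpha> f a - mlsi_gradient \<alpha> f b < 0" using less by simp
  from DERIV_neg_dec_right[OF derivative this] obtain d where "0 < d" and decreasing:
      "\<forall>t>0. t < d \<longrightarrow> mlsi_gap \<alpha> (\<lambda>x. f x + (0 + t) * h x) < mlsi_gap \<alpha> (\<lambda>x. f x + 0 * h x)"
    by blast
  define t where "t = min (d / 2) ((f b - \<delta>) * m b)"
  have "0 < t" "t < d"
    using \<open>0 < d\<close> \<open>\<delta> < f b\<close> m_pos[of b] by (auto simp: t_def)
  have "(\<lambda>x. f x + t * h x) \<in> densities_above \<delta>"
  proof -
    have "t \<le> (f b - \<delta>) * m b" by (simp add: t_def)
    then have "t / m b \<le> f b - \<delta>" using m_pos[of b] by (simp add: pos_divide_le_eq)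
    moreover have "0 < t / m a" using \<open>0 < t\<close> m_pos[of a] by simp
    ultimately have "\<delta> \<le> f x + t * h x" for x
      using f_ge[of x] \<open>a \<noteq> b\<close> by (auto simp: h_def)
    moreover have "inner_m m (\<lambda>x. f x + t * h x) (\<lambda>_. 1) = inner_m m f (\<lambda>_. 1) + t * inner_m m h (\<lambda>_. 1)"
      by (simp add: inner_m_def algebra_simps sum.distrib sum_distrib_left)
    ultimately show ?thesis using f by (simp add: densities_above_def pairing)
  qed
  with minimal decreasing \<open>0 < t\<close> \<open>t < d\<close> show False by fastforce
qed

lemma densities_above_has_minimizer:
  assumes "0 < \<delta>" and "f \<in> densities_above \<delta>"
  obtains f\<^sub>0 where "f\<^sub>0 \<in> densities_above \<delta>"
    and "\<And>g. g \<in> densities_above \<delta> \<Longrightarrow> mlsi_gap \<alpha> f\<^sub>0 \<le> mlsi_gap \<alpha> g"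
proof -
  \<comment> \<open>\<open>'a \<Rightarrow> real\<close> has no Heine-Borel instance, so compactness is argued in \<open>real^'a\<close>\<close>
  define S where "S = {v :: real^'a. (\<forall>x. \<delta> \<le> v $ x) \<and> (\<Sum>x\<in>UNIV. v $ x * 1 * m x) = 1}"
  have S_iff: "v \<in> S \<longleftrightarrow> vec_nth v \<in> densities_above \<delta>" for v
    by (simp add: S_def densities_above_def inner_m_def)
  have "closed S"
    unfolding S_def
    by (intro closed_Collect_conj closed_Collect_all closed_Collect_le closed_Collect_eq continuous_intros)
  moreover have "S \<subseteq> cbox (\<chi> x. \<delta>) (\<chi> x. 1 / m x)"
  proof
    fix v assume v: "v \<in> S"
    have v_nonneg: "0 \<le> v $ y" for y
      using v \<open>0 < \<delta>\<close> by (auto simp: S_def intro: order_trans[OF less_imp_le])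
    have "v $ x * m x \<le> 1" for x
    proof -
      have "v $ x * 1 * m x \<le> (\<Sum>y\<in>UNIV. v $ y * 1 * m y)"
        using v_nonneg m_nonneg by (intro member_le_sum) auto
      with v show ?thesis by (simp add: S_def)
    qed
    with v m_pos show "v \<in> cbox (\<chi> x. \<delta>) (\<chi> x. 1 / m x)"
      by (simp add: mem_box_cart S_def pos_le_divide_eq)
  qed
  ultimately have compact: "compact S"
    by (metis compact_cbox compact_Int_closed inf.absorb_iff2)
  have nonempty: "S \<noteq> {}" using assms(2) S_iff[of "vec_lambda f"] by (auto simp: vec_lambda_inverse)
  have continuous: "continuous_on S (\<lambda>v. mlsi_gap \<alpha> (vec_nth v))"
  proof -
    have "\<forall>v\<in>S. v $ x \<noteq> 0" for x
      using \<open>0 < \<delta>\<close> by (auto simp: S_def) (metis less_le_trans less_irrefl)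
    then show ?thesis
      unfolding mlsi_gap_def dirichlet_def Ent_def inner_m_def laplacian_def
      by (intro continuous_intros) auto
  qed
  obtain v where "v \<in> S"
    and v_min: "\<And>w. w \<in> S \<Longrightarrow> mlsi_gap \<alpha> (vec_nth v) \<le> mlsi_gap \<alpha> (vec_nth w)"
    using continuous_attains_inf[OF compact nonempty continuous] by blast
  show ?thesis
  proof (rule that)
    show "vec_nth v \<in> densities_above \<delta>" using \<open>v \<in> S\<close> S_iff by blast
    fix g assume "g \<in> densities_above \<delta>"
    then have "vec_lambda g \<in> S" by (simp add: S_iff vec_lambda_inverse)
    then show "mlsi_gap \<alpha> (vec_nth v) \<le> mlsi_gap \<alpha> g"
      using v_min by (fastforce simp: vec_lambda_inverse)
  qed
qed

lemma steepest_edge: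
  fixes g :: "'a \<Rightarrow> real"
  assumes "g u \<noteq> g v"
  obtains x y where "adj P x y" "g x < g y" "\<And>p q. adj P p q \<Longrightarrow> g q - g p \<le> g y - g x"
proof -
  define E where "E = {(p, q). adj P p q}"
  obtain p q where "adj P p q" "g p \<noteq> g q"
    using edgewise_constant[of g u v] assms by blast
  then have "(p, q) \<in> E" "(q, p) \<in> E" using adj_sym by (auto simp: E_def)
  then have "Max ((\<lambda>(p, q). g q - g p) ` E) \<in> (\<lambda>(p, q). g q - g p) ` E"
    by (intro Max_in) auto
  then obtain x y where xy: "adj P x y" "g y - g x = Max ((\<lambda>(p, q). g q - g p) ` E)"
    by (auto simp: E_def)
  moreover have steepest: "g q - g p \<le> g y - g x" if "adj P p q" for p q
    unfolding xy(2) by (rule Max_ge) (use that in \<open>auto simp: E_def\<close>)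
  moreover have "g x < g y"
    using steepest[OF \<open>adj P p q\<close>] steepest[OF adj_sym[OF \<open>adj P p q\<close>]] \<open>g p \<noteq> g q\<close> by linarith
  ultimately show ?thesis using xy(1) by (intro that) auto
qed

lemma curvature_at_steepest_edge:
  assumes "adj P x y" "g x < g y" and steepest: "\<And>p q. adj P p q \<Longrightarrow> g q - g p \<le> g y - g x"
  shows "min_ollivier P * (g y - g x) \<le> laplacian P g x - laplacian P g y"
proof -
  define L where "L = g y - g x"
  have "0 < L" using assms(2) by (simp add: L_def)
  have "lipschitz1 P (\<lambda>z. g z / L)"
  proof (rule lipschitz1I_edges)
    fix p q assume "adj P p q"
    then have "\<bar>g p - g q\<bar> \<le> L"
      using steepest[of p q] steepest[of q p] adj_sym by (force simp: L_def)
    then show "\<bar>g p / L - g q / L\<bar> \<le> 1"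
      using \<open>0 < L\<close> by (simp add: diff_divide_distrib[symmetric])
  qed
  moreover have "g y / L - g x / L = 1" using \<open>0 < L\<close> by (simp add: L_def diff_divide_distrib[symmetric])
  ultimately have "ollivier P x y \<le> laplacian P (\<lambda>z. g z / L) x - laplacian P (\<lambda>z. g z / L) y"
    by (rule ollivier_le_laplacian_diff[OF assms(1)])
  then have "ollivier P x y \<le> (laplacian P g x - laplacian P g y) / L"
    by (simp add: laplacian_divide diff_divide_distrib)
  with \<open>0 < L\<close> have "ollivier P x y * L \<le> laplacian P g x - laplacian P g y"
    by (simp add: pos_le_divide_eq)
  moreover have "min_ollivier P * L \<le> ollivier P x y * L"
    using min_ollivier_le[OF assms(1)] \<open>0 < L\<close> by (rule mult_right_mono[OF _ less_imp_le])
  ultimately show ?thesis by (simp add: L_def)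
qed

lemma sectional_coupling_mean_ratio_le:
  assumes "nonneg_sectional P x y" and f_pos: "\<And>z. 0 < f z" and "f x \<le> f y"
    and steepest: "\<And>p q. adj P p q \<Longrightarrow> f q / f p \<le> f y / f x"
  shows "(\<Sum>z\<in>UNIV. P y z * f z) / f y \<le> (\<Sum>z\<in>UNIV. P x z * f z) / f x"
proof -
  obtain \<pi> where \<pi>_nonneg: "\<And>a b. 0 \<le> \<pi> a b"
    and marginals: "\<And>a. (\<Sum>b\<in>UNIV. \<pi> a b) = P x a" "\<And>b. (\<Sum>a\<in>UNIV. \<pi> a b) = P y b"
    and support: "\<And>a b. 0 < \<pi> a b \<Longrightarrow> dist_comb P a b \<le> 1"
    using assms(1) unfolding nonneg_sectional_def by blast
  have "\<pi> a b * (f b / f y) \<le> \<pi> a b * (f a / f x)" for a b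
  proof (cases "0 < \<pi> a b")
    case True
    then have "a = b \<or> adj P a b" using support dist_comb_le_1D by blast
    then have "f b / f a \<le> f y / f x"
      using steepest \<open>f x \<le> f y\<close> f_pos[of x] by auto
    then have "f b / f y \<le> f a / f x"
      using f_pos[of a] f_pos[of b] f_pos[of x] f_pos[of y] by (simp add: field_simps)
    then show ?thesis using \<pi>_nonneg by (rule mult_left_mono)
  qed (use \<pi>_nonneg[of a b] in simp)
  note termwise = this
  have "(\<Sum>b\<in>UNIV. P y b * f b) / f y = (\<Sum>b\<in>UNIV. \<Sum>a\<in>UNIV. \<pi> a b * (f b / f y))"
    by (simp add: marginals(2)[symmetric] sum_distrib_right sum_divide_distrib)
  also have "\<dots> = (\<Sum>a\<in>UNIV. \<Sum>b\<in>UNIV. \<pi> a b * (f b / f y))"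
    by (rule sum.swap)
  also have "\<dots> \<le> (\<Sum>a\<in>UNIV. \<Sum>b\<in>UNIV. \<pi> a b * (f a / f x))"
    by (intro sum_mono termwise)
  also have "\<dots> = (\<Sum>a\<in>UNIV. P x a * f a) / f x"
    by (simp add: marginals(1)[symmetric] sum_distrib_right sum_divide_distrib)
  finally show ?thesis .
qed

lemma minimizer_constant:
  assumes sectional: "\<And>x y. adj P x y \<Longrightarrow> nonneg_sectional P x y"
    and "0 < \<delta>" and f: "f \<in> densities_above \<delta>"
    and minimal: "\<And>g. g \<in> densities_above \<delta> \<Longrightarrow> mlsi_gap \<alpha> f \<le> mlsi_gap \<alpha> g"
    and below: "\<alpha> < min_ollivier P"
  shows "f u = f v"
proof (rule ccontr)
  assume "f u \<noteq> f v"
  have f_ge: "\<delta> \<le> f z" for z using f by (simp add: densities_above_def)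
  with \<open>0 < \<delta>\<close> have f_pos: "0 < f z" for z by (rule less_le_trans)
  define g where "g z = ln (f z)" for z
  have "g u \<noteq> g v" using \<open>f u \<noteq> f v\<close> f_pos by (simp add: g_def)
  then obtain x y where "adj P x y" "g x < g y"
    and steepest: "\<And>p q. adj P p q \<Longrightarrow> g q - g p \<le> g y - g x"
    by (rule steepest_edge) blast
  have "f x < f y" using \<open>g x < g y\<close> f_pos by (simp add: g_def)
  have "f q / f p \<le> f y / f x" if "adj P p q" for p q
  proof -
    have "ln (f q / f p) \<le> ln (f y / f x)"
      using steepest[OF that] by (simp only: g_def ln_divide_pos[OF f_pos f_pos])
    then show ?thesis using f_pos by (simp add: divide_pos_pos)
  qed
  then have mean_ratio: "(\<Sum>z\<in>UNIV. P y z * f z) / f y \<le> (\<Sum>z\<in>UNIV. P x z * f z) / f x"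
    using \<open>f x < f y\<close>
    by (intro sectional_coupling_mean_ratio_le[OF sectional[OF \<open>adj P x y\<close>] f_pos]) auto
  have curvature: "min_ollivier P * (g y - g x) \<le> laplacian P g x - laplacian P g y"
    using \<open>adj P x y\<close> \<open>g x < g y\<close> steepest by (rule curvature_at_steepest_edge)
  have "mlsi_gradient \<alpha> f y \<le> mlsi_gradient \<alpha> f x"
    using \<open>f x < f y\<close> f_ge[of x] by (intro minimizer_gradient_le[OF \<open>0 < \<delta>\<close> f minimal]) auto
  then have "laplacian P g x - laplacian P g y + ((\<Sum>z\<in>UNIV. P x z * f z) / f x - (\<Sum>z\<in>UNIV. P y z * f z) / f y)
      \<le> \<alpha> * (g y - g x)"
    using f_pos[of x] f_pos[of y]
    by (simp add: mlsi_gradient_def laplacian_eq[of f] g_def[symmetric] diff_divide_distrib algebra_simps)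
  with mean_ratio curvature have "min_ollivier P * (g y - g x) \<le> \<alpha> * (g y - g x)"
    by linarith
  with \<open>g x < g y\<close> below show False by simp
qed

lemma mlsi_gap_nonneg:
  assumes sectional: "\<And>x y. adj P x y \<Longrightarrow> nonneg_sectional P x y"
    and f_pos: "\<And>x. 0 < f x" and "inner_m m f (\<lambda>_. 1) = 1"
    and below: "\<alpha> < min_ollivier P"
  shows "0 \<le> mlsi_gap \<alpha> f"
proof -
  define \<delta> where "\<delta> = Min (range f)"
  have "0 < \<delta>" using f_pos by (simp add: \<delta>_def)
  have "f \<in> densities_above \<delta>" using assms(3) by (simp add: densities_above_def \<delta>_def)
  then obtain f\<^sub>0 where f\<^sub>0: "f\<^sub>0 \<in> densities_above \<delta>"
    and minimal: "\<And>g. g \<in> densities_above \<delta> \<Longrightarrow> mlsi_gap \<alpha> f\<^sub>0 \<le> mlsi_gap \<alpha> g"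
    using densities_above_has_minimizer[OF \<open>0 < \<delta>\<close>] by blast
  obtain c where c: "f\<^sub>0 = (\<lambda>_. c)"
    using minimizer_constant[OF sectional \<open>0 < \<delta>\<close> f\<^sub>0 minimal below] by (metis ext)
  then have "c * (\<Sum>z\<in>UNIV. m z) = 1"
    using f\<^sub>0 by (simp add: densities_above_def inner_m_def sum_distrib_left)
  then have "f\<^sub>0 = (\<lambda>_. 1)" using c by (simp add: m_sum)
  then have "mlsi_gap \<alpha> f\<^sub>0 = 0"
    by (simp add: mlsi_gap_def dirichlet_def Ent_def inner_m_def laplacian_def)
  with minimal[OF \<open>f \<in> densities_above \<delta>\<close>] show ?thesis by simp
qed

lemma Ent_pos:
  assumes f_pos: "\<And>x. 0 < f x" and "inner_m m f (\<lambda>_. 1) = 1" and "f a \<noteq> f b"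
  shows "0 < Ent m f"
proof -
  obtain c where "f c \<noteq> 1" using \<open>f a \<noteq> f b\<close> by metis
  have "(\<Sum>x\<in>UNIV. (f x - 1) * m x) < (\<Sum>x\<in>UNIV. f x * ln (f x) * m x)"
  proof (rule sum_strict_mono_ex1)
    show "\<forall>x\<in>UNIV. (f x - 1) * m x \<le> f x * ln (f x) * m x"
      using x_ln_x_ge[OF f_pos] m_nonneg by (simp add: mult_right_mono)
    have "(f c - 1) * m c < f c * ln (f c) * m c"
      using x_ln_x_gt[OF f_pos \<open>f c \<noteq> 1\<close>] m_pos[of c] by (rule mult_strict_right_mono)
    then show "\<exists>x\<in>UNIV. (f x - 1) * m x < f x * ln (f x) * m x" by blast
  qed simp
  moreover have "(\<Sum>x\<in>UNIV. (f x - 1) * m x) = 0"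
    using assms(2) m_sum by (simp add: inner_m_def left_diff_distrib sum_subtractf)
  ultimately show ?thesis by (simp add: Ent_def inner_m_def)
qed

lemma nonconstant_density_exists:
  assumes "a \<noteq> b"
  obtains f where "\<And>x. 0 < f x" "inner_m m f (\<lambda>_. 1) = 1" "f a \<noteq> f b"
proof
  let ?f = "\<lambda>z. (if z = a then 2 else 1) / (1 + m a)"
  show "0 < ?f x" for x using m_pos[of a] by simp
  have "(\<Sum>z\<in>UNIV. (if z = a then 2 else 1) * m z) = (\<Sum>z\<in>UNIV. m z + (if z = a then m z else 0))"
    by (intro sum.cong) auto
  also have "\<dots> = 1 + m a" by (simp add: sum.distrib m_sum)
  finally show "inner_m m ?f (\<lambda>_. 1) = 1"
    using m_pos[of a] by (simp add: inner_m_def sum_divide_distrib[symmetric])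
  show "?f a \<noteq> ?f b" using \<open>a \<noteq> b\<close> m_pos[of a] by simp
qed

lemma min_ollivier_le_alpha_mod:
  assumes sectional: "\<And>x y. adj P x y \<Longrightarrow> nonneg_sectional P x y"
  shows "min_ollivier P \<le> alpha_mod P m"
proof (cases "\<exists>x y. adj P x y")
  case True
  then obtain a b :: 'a where "a \<noteq> b" by (auto simp: adj_def)
  then obtain f where "\<And>x. 0 < f x" "inner_m m f (\<lambda>_. 1) = 1" "f a \<noteq> f b"
    by (rule nonconstant_density_exists) blast
  show ?thesis
    unfolding alpha_mod_def
  proof (rule cInf_greatest)
    fix r assume "r \<in> {dirichlet P m f (\<lambda>x. ln (f x)) / Ent m f | f.
        (\<forall>x. 0 < f x) \<and> inner_m m f (\<lambda>_. 1) = 1 \<and> (\<exists>x y. f x \<noteq> f y)}"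
    then obtain f a b where r: "r = dirichlet P m f (\<lambda>x. ln (f x)) / Ent m f"
      and f_pos: "\<And>x. 0 < f x" and normalized: "inner_m m f (\<lambda>_. 1) = 1" and "f a \<noteq> f b"
      by blast
    have "0 < Ent m f" using f_pos normalized \<open>f a \<noteq> f b\<close> by (rule Ent_pos)
    have "\<alpha> \<le> r" if "\<alpha> < min_ollivier P" for \<alpha>
      using mlsi_gap_nonneg[OF sectional f_pos normalized that] \<open>0 < Ent m f\<close>
      by (simp add: r mlsi_gap_def pos_le_divide_eq)
    then show "min_ollivier P \<le> r" by (rule dense_le)
  next
    show "{dirichlet P m f (\<lambda>x. ln (f x)) / Ent m f | f.
        (\<forall>x. 0 < f x) \<and> inner_m m f (\<lambda>_. 1) = 1 \<and> (\<exists>x y. f x \<noteq> f y)} \<noteq> {}"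
      using \<open>\<And>x. 0 < f x\<close> \<open>inner_m m f (\<lambda>_. 1) = 1\<close> \<open>f a \<noteq> f b\<close> by blast
  qed
next
  case False
  \<comment> \<open>without edges both sets are empty, and both sides are the same junk value \<open>Inf {}\<close>\<close>
  then have "\<not> (\<exists>x y. f x \<noteq> f y)" for f :: "'a \<Rightarrow> real"
    using edgewise_constant by blast
  then have no_ratios: "{dirichlet P m f (\<lambda>x. ln (f x)) / Ent m f | f.
      (\<forall>x. 0 < f x) \<and> inner_m m f (\<lambda>_. 1) = 1 \<and> (\<exists>x y. f x \<noteq> f y)} = {}"
    by simp
  have no_edges: "{ollivier P x y | x y. adj P x y} = {}" using False by blast
  show ?thesis unfolding alpha_mod_def no_ratios no_edges ..
qed

end

theorem theorem4p4:
  fixes P :: "'a::finite \<Rightarrow> 'a \<Rightarrow> real" and m :: "'a \<Rightarrow> real"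
  assumes "lazy P"
    and "symmetric_support P"
    and "reversible_prob P m"
    and "connected_chain P"
    and "\<And>x y. adj P x y \<Longrightarrow> nonneg_sectional P x y"
  shows "alpha_mod P m \<ge> Inf {ollivier P x y | x y. adj P x y}"
proof -
  \<comment> \<open>only the Markov property is used from laziness; symmetric support follows from reversibility\<close>
  interpret reversible_chain P m
    using assms(1,3,4) by unfold_locales (simp_all add: lazy_def)
  show ?thesis using assms(5) by (rule min_ollivier_le_alpha_mod)
qed

end
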